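(* Let $0\le r\le n$, let $A\in\mathcal{A}_{n+1,r+1}$, and let $\mathcal{T}$ be an arbitrary tiling of $\Gamma(X(A))$. Then the fusion-exchange algorithm produces a tableau $T(A)$, a filling of the tiles of $\mathcal{T}$ with $\alpha$'s, $\beta$'s and $q$'s (some tiles possibly empty), such that: (i) every tile in the same north-strip as, and above, a tile containing $\alpha$ is empty; (ii) every tile in the same west-strip as, and to the left of, a tile containing $\beta$ is empty; (iii) every tile that is not forced to be empty by (i) or (ii) contains an $\alpha$, a $\beta$ or a $q$.
   Context: Words and diagrams. For $0\le r\le n$ let $B_n^r$ be the set of words $X\in\{H,L,0\}^n$ with exactly $r$ letters $L$. If $X$ has $k$ letters $H$, $r$ letters $L$ and $\ell$ letters $0$, its rhombic diagram $\Gamma(X)$ is the closed region bounded by two paths of unit steps, using the directions west (horizontal), south (vertical) and southwest (diagonal: a fixed unit vector strictly between west and south), both going from a point $P$ to a point $Q$: the northwest boundary consists of $\ell$ west steps, then $r$ southwest steps, then $k$ south steps; the southeast boundary is obtained by reading $X$ left to right and taking a west step for each $0$, a southwest step for each $L$, a south step for each $H$. A tiling of $\Gamma(X)$ is a tiling by unit rhombi of three kinds: squares (horizontal and vertical edges), tall rhombi (vertical and diagonal edges), short rhombi (horizontal and diagonal edges). A west-strip (resp. north-strip, northwest-strip) is a maximal set of tiles connected through shared vertical (resp. horizontal, diagonal) edges; each runs from an edge of the southeast boundary to an edge of the northwest boundary. Each tile has two edges on its lower-right side: its east edge (vertical for squares and tall rhombi, diagonal for short rhombi) and its south edge (horizontal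 for squares and short rhombi, diagonal for tall rhombi); the parallel edges on its upper-left side are its west and north edges. Assemblées. An assemblée of size $(m,s)$ is a collection of $s$ nonempty, pairwise disjoint, linearly ordered sets (blocks) with union $\{1,\dots,m\}$; the last element of a block is its block-end. Blocks are listed in the canonical order with decreasing block-ends, and the assemblée is identified with the concatenated word. $\mathcal{A}_{m,s}$ is the set of these. For $A\in\mathcal{A}_{n+1,r+1}$ with block-ends $b_1>\dots>b_{r+1}$, a non-block-end element $x$ is an increase if $x+1$ appears to the right of $x$ in $A$, and a decrease otherwise (so $n+1$, if not a block-end, is a decrease). $X(A)\in B_n^r$ is obtained from $A$ by deleting its last letter $b_{r+1}$ and replacing each increase by $H$, each decrease by $0$ and each remaining block-end by $L$. Fusion-exchange algorithm. A label is a finite, possibly empty, set of consecutive integers; for labels $E,S$ write $E\succ S$ if both are nonempty and $\min E=\max S+1$. Given $A\in\mathcal{A}_{n+1,r+1}$ and a tiling of $\Gamma(X(A))$: initially the southeast boundary edges, in order from $P$ to $Q$, receive the singleton labels of the letters of $A$ from left to right, $b_{r+1}$ omitted. Step: choose a tile whose east and south edges are labeled, say by $E$ and $S$, and whose west and north edges are not. (R I) If $E\succ S$ and the south edge is horizontal: west edge gets $E\cup S$, north edge gets $\emptyset$, place $\alpha$ in the tile. (R II) If $S\succ E$ and the east edge is vertical: north edge gets $E\cup S$, west edge gets $\emptyset$, place $\beta$. (R III) Otherwise: west edge gets $E$, north edge gets $S$, and place $q$ if $E\ne\emptyset$ and $S\ne\emptyset$ (else leave the tile empty). Repeat until every edge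 is labeled; $T(A)$ is the resulting filling. *)

theory Defs
  imports Main
begin

text \<open>The letter 0 is written Z. Z, L, H are also the edge directions west (horizontal),
southwest (diagonal), south (vertical).\<close>
datatype letter = H | L | Z

fun rank :: "letter \<Rightarrow> nat" where
  "rank Z = 0" | "rank L = 1" | "rank H = 2"

text \<open>An assemblee of size (m,s), given as the list of its blocks in canonical order
(decreasing block-ends); each block is a nonempty list (linearly ordered set), and the
assemblee is identified with the concatenated word.\<close>
definition assemblee :: "nat \<Rightarrow> nat \<Rightarrow> nat list list \<Rightarrow> bool" where
  "assemblee m s bs \<longleftrightarrow> length bs = s \<and> (\<forall>b\<in>set bs. b \<noteq> []) \<and>
     distinct (concat bs) \<and> set (concat bs) = {1..m} \<and>
     sorted_wrt (\<lambda>b c. last c < last b) bs"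

definition block_ends :: "nat list list \<Rightarrow> nat set" where
  "block_ends bs = set (map last bs)"

text \<open>The word X(A) of length n: the last letter of A is deleted; block-ends become L,
increases (x+1 to the right of x) become H, decreases become Z.\<close>
definition XA :: "nat \<Rightarrow> nat list list \<Rightarrow> letter list" where
  "XA n bs = (let w = concat bs in
     map (\<lambda>i. if w ! i \<in> block_ends bs then L
               else if Suc (w ! i) \<in> set (drop (Suc i) w) then H else Z) [0..<n])"

text \<open>A tiling of the diagram of X is encoded by a sequence of tile additions starting from
the southeast boundary: the current boundary path from P to Q is a list of strips (strip c is
the strip starting at the c-th edge of the southeast boundary, of direction X!c). Adding the tile
whose east and south edges are the edges at positions p and p+1 of the current path swaps these
two edges (the east edge precedes the south edge on the path, and the pair must be one of
H Z (square), H L (tall rhombus), L Z (short rhombus), i.e. rank decreases). The sequence is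
complete when the path is the northwest boundary 0^l L^r H^k, i.e. sorted by rank.\<close>
fun valid_flips :: "letter list \<Rightarrow> nat list \<Rightarrow> nat list \<Rightarrow> bool" where
  "valid_flips X st [] = sorted (map (\<lambda>c. rank (X ! c)) st)"
| "valid_flips X st (p # ps) =
     (Suc p < length st \<and> rank (X ! (st ! Suc p)) < rank (X ! (st ! p)) \<and>
      valid_flips X (st[p := st ! Suc p, Suc p := st ! p]) ps)"

datatype content = Alpha | Beta | Qc | Empty

definition succl :: "nat set \<Rightarrow> nat set \<Rightarrow> bool" (infix "\<succ>\<^sub>l" 50) where
  "E \<succ>\<^sub>l S \<longleftrightarrow> E \<noteq> {} \<and> S \<noteq> {} \<and> Min E = Max S + 1"

text \<open>Rule applied to a tile with east edge of direction a labelled E and south edge of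
direction b labelled S. Returns (content, label of north edge, label of west edge).\<close>
definition fe_rule :: "letter \<Rightarrow> letter \<Rightarrow> nat set \<Rightarrow> nat set \<Rightarrow> content \<times> nat set \<times> nat set" where
  "fe_rule a b E S =
     (if E \<succ>\<^sub>l S \<and> b = Z then (Alpha, {}, E \<union> S)
      else if S \<succ>\<^sub>l E \<and> a = H then (Beta, E \<union> S, {})
      else (if E \<noteq> {} \<and> S \<noteq> {} then Qc else Empty, S, E))"

text \<open>Run the algorithm along a flip sequence; outputs, in processing order, the tiles as
(strip of east edge, strip of south edge, content).\<close>
fun fe_run :: "letter list \<Rightarrow> nat list \<Rightarrow> nat set list \<Rightarrow> nat list \<Rightarrow> (nat \<times> nat \<times> content) list" where
  "fe_run X st lab [] = []"
| "fe_run X st lab (p # ps) =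
     (let s = st ! p; t = st ! Suc p; E = lab ! p; S = lab ! Suc p;
          (c, nlab, wlab) = fe_rule (X ! s) (X ! t) E S
      in (s, t, c) # fe_run X (st[p := t, Suc p := s]) (lab[p := nlab, Suc p := wlab]) ps)"

definition fe_tiles :: "nat \<Rightarrow> nat list list \<Rightarrow> nat list \<Rightarrow> (nat \<times> nat \<times> content) list" where
  "fe_tiles n bs ps = fe_run (XA n bs) [0..<n] (map (\<lambda>x. {x}) (take n (concat bs))) ps"

definition on_strip :: "(nat \<times> nat \<times> content) list \<Rightarrow> nat \<Rightarrow> nat \<Rightarrow> bool" where
  "on_strip ts c i \<longleftrightarrow> fst (ts ! i) = c \<or> fst (snd (ts ! i)) = c"

definition tcontent :: "(nat \<times> nat \<times> content) list \<Rightarrow> nat \<Rightarrow> content" where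
  "tcontent ts i = snd (snd (ts ! i))"

text \<open>Tile j is forced empty by (i): it lies on the north-strip (strip of direction Z) of an
alpha-tile i, and strictly above it (further along the strip towards the northwest boundary,
i.e. added later). Similarly (ii) with west-strips (direction H), beta, to the left.\<close>
definition forced_empty_alpha :: "letter list \<Rightarrow> (nat \<times> nat \<times> content) list \<Rightarrow> nat \<Rightarrow> bool" where
  "forced_empty_alpha X ts j \<longleftrightarrow> (\<exists>i c. i < j \<and> X ! c = Z \<and> on_strip ts c i \<and> on_strip ts c j
      \<and> tcontent ts i = Alpha)"

definition forced_empty_beta :: "letter list \<Rightarrow> (nat \<times> nat \<times> content) list \<Rightarrow> nat \<Rightarrow> bool" where
  "forced_empty_beta X ts j \<longleftrightarrow> (\<exists>i c. i < j \<and> X ! c = H \<and> on_strip ts c i \<and> on_strip ts c j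
      \<and> tcontent ts i = Beta)"

end

theory Submission
  imports Defs
begin

text \<open>Along the run, the label on an edge of the current boundary path is empty exactly when the
strip of that edge is already closed: it is a north-strip through an \<open>\<alpha>\<close>-tile or a west-strip
through a \<open>\<beta>\<close>-tile. A tile is left empty iff one of its two incoming labels is empty, i.e. iff
it lies above an \<open>\<alpha>\<close> on its north-strip or left of a \<open>\<beta>\<close> on its west-strip; and the rules
preserve the invariant, since \<open>\<alpha>\<close> empties precisely the outgoing label of the north-strip and
\<open>\<beta>\<close> that of the west-strip. Initially all labels are singletons, so nothing is closed.\<close>

definition strip_contains :: "(nat \<times> nat \<times> content) list \<Rightarrow> nat \<Rightarrow> content \<Rightarrow> bool" where
  "strip_contains ts c x \<longleftrightarrow> (\<exists>i<length ts. on_strip ts c i \<and> tcontent ts i = x)"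

definition strip_closed :: "letter list \<Rightarrow> (nat \<times> nat \<times> content) list \<Rightarrow> nat \<Rightarrow> bool" where
  "strip_closed X ts c \<longleftrightarrow>
     (X ! c = Z \<and> strip_contains ts c Alpha) \<or> (X ! c = H \<and> strip_contains ts c Beta)"

definition empty_labels_closed ::
    "letter list \<Rightarrow> (nat \<times> nat \<times> content) list \<Rightarrow> nat list \<Rightarrow> nat set list \<Rightarrow> bool" where
  "empty_labels_closed X ts st lab \<longleftrightarrow>
     (\<forall>k<length st. lab ! k = {} \<longleftrightarrow> strip_closed X ts (st ! k))"

lemma strip_contains_snoc:
  "strip_contains (ts @ [(s, t, c)]) x y \<longleftrightarrow> strip_contains ts x y \<or> ((x = s \<or> x = t) \<and> c = y)"
  unfolding strip_contains_def length_append_singleton Ex_less_Suc on_strip_def tcontent_def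
  by (auto simp: nth_append)

lemma forced_empty_alpha_at:
  "forced_empty_alpha X (ts @ (s, t, c) # rest) (length ts) \<longleftrightarrow>
     (\<exists>x\<in>{s, t}. X ! x = Z \<and> strip_contains ts x Alpha)"
  unfolding forced_empty_alpha_def strip_contains_def on_strip_def tcontent_def
  by (auto simp: nth_append)

lemma forced_empty_beta_at:
  "forced_empty_beta X (ts @ (s, t, c) # rest) (length ts) \<longleftrightarrow>
     (\<exists>x\<in>{s, t}. X ! x = H \<and> strip_contains ts x Beta)"
  unfolding forced_empty_beta_def strip_contains_def on_strip_def tcontent_def
  by (auto simp: nth_append)

lemma fe_rule_spec:
  assumes "fe_rule a b E S = (c, N, W)"
  shows fe_rule_Empty_iff: "c = Empty \<longleftrightarrow> E = {} \<or> S = {}"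
    and fe_rule_north_empty_iff: "N = {} \<longleftrightarrow> S = {} \<or> c = Alpha"
    and fe_rule_west_empty_iff: "W = {} \<longleftrightarrow> E = {} \<or> c = Beta"
    and fe_rule_Alpha_south: "c = Alpha \<Longrightarrow> b = Z"
    and fe_rule_Beta_east: "c = Beta \<Longrightarrow> a = H"
  using assms unfolding fe_rule_def succl_def by (auto split: if_splits)

lemma rank_less_imp_neq:
  assumes "rank b < rank a"
  shows "a \<noteq> Z" and "b \<noteq> H"
proof -
  have "a \<noteq> Z \<and> b \<noteq> H" using assms by (cases a; cases b; simp)
  then show "a \<noteq> Z" "b \<noteq> H" by simp_all
qed

context
  fixes X :: "letter list" and ts :: "(nat \<times> nat \<times> content) list"
    and st :: "nat list" and lab :: "nat set list" and p :: nat
  assumes closed: "empty_labels_closed X ts st lab"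
    and flip: "Suc p < length st" "rank (X ! (st ! Suc p)) < rank (X ! (st ! p))"
begin

lemma east_label_empty_iff: "lab ! p = {} \<longleftrightarrow> X ! (st ! p) = H \<and> strip_contains ts (st ! p) Beta"
  using closed flip rank_less_imp_neq[OF flip(2)]
  unfolding empty_labels_closed_def strip_closed_def by auto

lemma south_label_empty_iff:
  "lab ! Suc p = {} \<longleftrightarrow> X ! (st ! Suc p) = Z \<and> strip_contains ts (st ! Suc p) Alpha"
  using closed flip rank_less_imp_neq[OF flip(2)]
  unfolding empty_labels_closed_def strip_closed_def by auto

lemma tile_Empty_iff_forced:
  assumes "fe_rule (X ! (st ! p)) (X ! (st ! Suc p)) (lab ! p) (lab ! Suc p) = (c, N, W)"
  shows "c = Empty \<longleftrightarrow>
    forced_empty_alpha X (ts @ (st ! p, st ! Suc p, c) # rest) (length ts) \<or>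
    forced_empty_beta X (ts @ (st ! p, st ! Suc p, c) # rest) (length ts)"
  unfolding forced_empty_alpha_at forced_empty_beta_at fe_rule_Empty_iff[OF assms(1)]
    east_label_empty_iff south_label_empty_iff
  using rank_less_imp_neq[OF flip(2)] by auto

lemma empty_labels_closed_flip:
  assumes "distinct st" "length lab = length st"
    and rule: "fe_rule (X ! (st ! p)) (X ! (st ! Suc p)) (lab ! p) (lab ! Suc p) = (c, N, W)"
  shows "empty_labels_closed X (ts @ [(st ! p, st ! Suc p, c)])
           (st[p := st ! Suc p, Suc p := st ! p]) (lab[p := N, Suc p := W])"
  unfolding empty_labels_closed_def
proof (intro allI impI)
  let ?s = "st ! p" and ?t = "st ! Suc p" and ?st' = "st[p := st ! Suc p, Suc p := st ! p]"
  fix k assume "k < length ?st'"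
  then have k: "k < length st" by simp
  note rule_facts = fe_rule_spec[OF rule] east_label_empty_iff south_label_empty_iff
    rank_less_imp_neq[OF flip(2)]
  consider "k = p" | "k = Suc p" | "k \<noteq> p" "k \<noteq> Suc p" by blast
  then show "lab[p := N, Suc p := W] ! k = {} \<longleftrightarrow>
      strip_closed X (ts @ [(?s, ?t, c)]) (?st' ! k)"
  proof cases
    case 1
    then have "?st' ! k = ?t" "lab[p := N, Suc p := W] ! k = N"
      using flip(1) assms(2) by simp_all
    then show ?thesis
      using rule_facts unfolding strip_closed_def strip_contains_snoc by auto
  next
    case 2
    then have "?st' ! k = ?s" "lab[p := N, Suc p := W] ! k = W"
      using flip(1) assms(2) by simp_all
    then show ?thesis
      using rule_facts unfolding strip_closed_def strip_contains_snoc by auto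
  next
    case 3
    then have "st ! k \<noteq> ?s" "st ! k \<noteq> ?t"
      using k flip(1) \<open>distinct st\<close> by (auto simp: nth_eq_iff_index_eq)
    then have "strip_closed X (ts @ [(?s, ?t, c)]) (st ! k) \<longleftrightarrow> strip_closed X ts (st ! k)"
      unfolding strip_closed_def strip_contains_snoc by simp
    moreover have "lab ! k = {} \<longleftrightarrow> strip_closed X ts (st ! k)"
      using closed k unfolding empty_labels_closed_def by blast
    ultimately show ?thesis using 3 by simp
  qed
qed

end

lemma fe_run_Empty_iff_forced:
  assumes "valid_flips X st ps" "distinct st" "length lab = length st"
    and "empty_labels_closed X ts st lab"
    and "length ts \<le> j" "j < length (ts @ fe_run X st lab ps)"
  shows "tcontent (ts @ fe_run X st lab ps) j = Empty \<longleftrightarrow>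
    forced_empty_alpha X (ts @ fe_run X st lab ps) j \<or> forced_empty_beta X (ts @ fe_run X st lab ps) j"
  using assms
proof (induction ps arbitrary: st lab ts)
  case Nil
  then show ?case by simp
next
  case (Cons p ps)
  let ?s = "st ! p" and ?t = "st ! Suc p"
  obtain c N W where rule: "fe_rule (X ! ?s) (X ! ?t) (lab ! p) (lab ! Suc p) = (c, N, W)"
    by (metis prod_cases3)
  let ?st' = "st[p := ?t, Suc p := ?s]" and ?lab' = "lab[p := N, Suc p := W]"
  have flip: "Suc p < length st" "rank (X ! ?t) < rank (X ! ?s)" "valid_flips X ?st' ps"
    using Cons.prems(1) by simp_all
  have run: "fe_run X st lab (p # ps) = (?s, ?t, c) # fe_run X ?st' ?lab' ps"
    using rule by (simp add: Let_def)
  show ?case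
  proof (cases "j = length ts")
    case True
    then show ?thesis
      using tile_Empty_iff_forced[OF Cons.prems(4) flip(1,2) rule] unfolding run tcontent_def by simp
  next
    case False
    have "distinct ?st'" using Cons.prems(2) flip(1) by simp
    moreover have "length ?lab' = length ?st'" using Cons.prems(3) by simp
    moreover have "empty_labels_closed X (ts @ [(?s, ?t, c)]) ?st' ?lab'"
      using empty_labels_closed_flip[OF Cons.prems(4) flip(1,2) Cons.prems(2,3) rule] .
    moreover have "length (ts @ [(?s, ?t, c)]) \<le> j"
      using Cons.prems(5) False by simp
    moreover have "j < length ((ts @ [(?s, ?t, c)]) @ fe_run X ?st' ?lab' ps)"
      using Cons.prems(6) unfolding run by simp
    ultimately show ?thesis
      using Cons.IH[OF flip(3), of ?lab' "ts @ [(?s, ?t, c)]"] unfolding run by simp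
  qed
qed

lemma assemblee_length: "assemblee m s bs \<Longrightarrow> length (concat bs) = m"
  unfolding assemblee_def by (metis card_atLeastAtMost diff_Suc_1 distinct_card)

theorem lemma3p1:
  fixes n r :: nat and bs :: "nat list list" and ps :: "nat list"
  assumes "r \<le> n"
    and "assemblee (n + 1) (r + 1) bs"
    and "valid_flips (XA n bs) [0..<n] ps"
  shows "let X = XA n bs; ts = fe_tiles n bs ps in
           (\<forall>j < length ts. forced_empty_alpha X ts j \<longrightarrow> tcontent ts j = Empty) \<and>
           (\<forall>j < length ts. forced_empty_beta X ts j \<longrightarrow> tcontent ts j = Empty) \<and>
           (\<forall>j < length ts. \<not> forced_empty_alpha X ts j \<and> \<not> forced_empty_beta X ts j
                \<longrightarrow> tcontent ts j \<noteq> Empty)"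
proof -
  let ?lab = "map (\<lambda>x. {x}) (take n (concat bs))"
  have "length (concat bs) = n + 1" using assemblee_length[OF assms(2)] .
  then have "length ?lab = length [0..<n]" by simp
  moreover have "empty_labels_closed (XA n bs) [] [0..<n] ?lab"
    unfolding empty_labels_closed_def strip_closed_def strip_contains_def
    using \<open>length (concat bs) = n + 1\<close> by simp
  ultimately have "j < length (fe_tiles n bs ps) \<Longrightarrow>
      tcontent (fe_tiles n bs ps) j = Empty \<longleftrightarrow>
      forced_empty_alpha (XA n bs) (fe_tiles n bs ps) j \<or>
      forced_empty_beta (XA n bs) (fe_tiles n bs ps) j" for j
    using fe_run_Empty_iff_forced[OF assms(3), of ?lab "[]"] unfolding fe_tiles_def by simp
  then show ?thesis by (auto simp: Let_def)
qed

end
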